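(* Let $n\ge2$ and let $v_1,\dots,v_k$ and $u_1,\dots,u_k$ be two collections of $k\le n-1$ normalized vectors in $\mathbb C^n$ such that $\dim\mathrm{span}\{v_1,\dots,v_k\}\ge2$ and $\dim\mathrm{span}\{u_1,\dots,u_k\}\ge2$. Let $\mathcal V:=\{X\in M_n(\mathbb C):\ v_1^\ast Xu_1=\dots=v_k^\ast Xu_k=0\}$. Then $\mathcal V$ contains no rank-one matrix that is left-symmetric relative to $\mathcal V$.
   Context: $M_n(\mathbb C)$ carries the operator (spectral) norm. $A\perp B$ (Birkhoff–James orthogonality) means $\|A+\lambda B\|\ge\|A\|$ for all $\lambda\in\mathbb C$. For a subset $\mathcal S$, an element $A\in\mathcal S$ is left-symmetric relative to $\mathcal S$ if for every $B\in\mathcal S$, $A\perp B$ implies $B\perp A$. *)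

theory Defs
  imports "HOL-Analysis.Analysis"
begin

text \<open>Matrices in M_n(C) are represented as complex^'n^'n, vectors in C^n as complex^'n.
  The operator (spectral) norm is the operator norm induced by the Euclidean norm on C^n.\<close>

definition opnorm :: "complex^'n^'n \<Rightarrow> real" where
  "opnorm A = onorm (\<lambda>x. A *v x)"

definition cmat_scale :: "complex \<Rightarrow> complex^'n^'n \<Rightarrow> complex^'n^'n" where
  "cmat_scale c B = (\<chi> i j. c * B $ i $ j)"

definition bj_orth :: "complex^'n^'n \<Rightarrow> complex^'n^'n \<Rightarrow> bool" where
  "bj_orth A B \<longleftrightarrow> (\<forall>c::complex. opnorm (A + cmat_scale c B) \<ge> opnorm A)"

definition left_symmetric_in :: "complex^'n^'n \<Rightarrow> (complex^'n^'n) set \<Rightarrow> bool" where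
  "left_symmetric_in A S \<longleftrightarrow> A \<in> S \<and> (\<forall>B\<in>S. bj_orth A B \<longrightarrow> bj_orth B A)"

definition sesq :: "complex^'n \<Rightarrow> complex^'n^'n \<Rightarrow> complex^'n \<Rightarrow> complex" where
  "sesq v X u = (\<Sum>i\<in>UNIV. cnj (v $ i) * (X *v u) $ i)"

end

theory Submission
  imports Defs
begin

(* Write a rank-one A in the space as r x y^* with unit x, y; the constraints then say
   (v_i^* x)(y^* u_i) = 0 for every i.  For unit vectors g orthogonal to x, h orthogonal
   to y and s > 0 put B = s x h^* + s g y^* + g h^*: in the orthonormal frames (x, g) and
   (y, h) the matrix A is diag(r, 0) and B is [[0, s], [s, 1]].  Then A is orthogonal to B
   because (A + c B) y = r x + c s g has norm at least r = ||A||, whereas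
   ||B - A/r|| <= sqrt (1 + s^2) < ||B||, so B is not orthogonal to A.
   It remains to choose g, h and s with v_i^* B u_i = 0 for all i.  If both some v_i^* x and
   some y^* u_j vanish, the indices split into two proper parts and, as k < n, g and h can be
   taken orthogonal to the v_i of one part and the u_i of the other.  Otherwise, say, all
   y^* u_i vanish; h is taken orthogonal to all u_i but one u_j, where v_j is not parallel to
   x, and g, s are chosen so that the remaining constraint s v_j^* x + v_j^* g = 0 holds. *)

subsection \<open>The standard inner product on complex vectors\<close>

definition cinner :: "complex^'n \<Rightarrow> complex^'n \<Rightarrow> complex" where
  "cinner a b = (\<Sum>i\<in>UNIV. cnj (a$i) * b$i)"

lemma sesq_cinner: "sesq v X u = cinner v (X *v u)"
  by (simp add: sesq_def cinner_def)

lemma cinner_add_right: "cinner a (b + c) = cinner a b + cinner a c"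
  by (simp add: cinner_def distrib_left sum.distrib)

lemma cinner_add_left: "cinner (a + b) c = cinner a c + cinner b c"
  by (simp add: cinner_def distrib_right sum.distrib)

lemma cinner_diff_right: "cinner a (b - c) = cinner a b - cinner a c"
  by (simp add: cinner_def right_diff_distrib sum_subtractf)

lemma cinner_diff_left: "cinner (a - b) c = cinner a c - cinner b c"
  by (simp add: cinner_def left_diff_distrib sum_subtractf)

lemma cinner_scale_right: "cinner a (c *s b) = c * cinner a b"
  by (simp add: cinner_def sum_distrib_left algebra_simps)

lemma cinner_scale_left: "cinner (c *s a) b = cnj c * cinner a b"
  by (simp add: cinner_def sum_distrib_left algebra_simps)

lemmas cinner_simps = cinner_add_right cinner_add_left cinner_diff_right cinner_diff_left
  cinner_scale_right cinner_scale_left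

lemma cinner_commute: "cinner b a = cnj (cinner a b)"
  by (simp add: cinner_def mult.commute)

lemma cinner_eq_0_commute: "cinner a b = 0 \<Longrightarrow> cinner b a = 0"
  by (simp add: cinner_commute[of b a])

lemma inner_eq_Re_cinner: "inner a b = Re (cinner a b)"
  by (simp add: inner_vec_def cinner_def inner_complex_def Re_sum)

lemma inner_ii_scale_eq_Im_cinner: "inner (\<i> *s a) b = Im (cinner a b)"
  by (simp add: inner_vec_def cinner_def inner_complex_def Im_sum)

lemma cinner_self: "cinner z z = of_real ((norm z)^2)"
proof -
  have "Im (cinner z z) = 0" by (simp add: cinner_def Im_sum algebra_simps)
  moreover have "Re (cinner z z) = (norm z)^2"
    by (simp add: power2_norm_eq_inner inner_eq_Re_cinner)
  ultimately show ?thesis by (simp add: complex_eq_iff)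
qed

lemma cnj_mult_self: "cnj a * a = of_real ((cmod a)^2)"
  using cmod_power2[of a] by (simp add: complex_eq_iff power2_eq_square)

lemma norm_cscale: "norm (c *s (w::complex^'n)) = cmod c * norm w"
proof -
  have "complex_of_real ((norm (c *s w))^2) = cinner (c *s w) (c *s w)"
    by (simp only: cinner_self)
  also have "\<dots> = (cnj c * c) * cinner w w" by (simp add: cinner_simps)
  also have "\<dots> = complex_of_real ((cmod c * norm w)^2)"
    by (simp only: cnj_mult_self cinner_self of_real_mult[symmetric] power_mult_distrib)
  finally have "(norm (c *s w))^2 = (cmod c * norm w)^2" using of_real_eq_iff by blast
  then show ?thesis by (simp add: power2_eq_iff_nonneg)
qed

definition orthonormal_pair :: "complex^'n \<Rightarrow> complex^'n \<Rightarrow> bool" where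
  "orthonormal_pair x g \<longleftrightarrow> norm x = 1 \<and> norm g = 1 \<and> cinner x g = 0"

lemma orthonormal_pair_pythagoras:
  assumes "orthonormal_pair x g"
  shows "(norm (a *s x + b *s g))^2 = (cmod a)^2 + (cmod b)^2"
proof -
  have "cinner x x = 1" "cinner g g = 1" "cinner x g = 0" "cinner g x = 0"
    using assms by (simp_all add: orthonormal_pair_def cinner_self cinner_eq_0_commute)
  then have "complex_of_real ((norm (a *s x + b *s g))^2) = cnj a * a + cnj b * b"
    by (simp add: cinner_self[symmetric] cinner_simps del: of_real_power)
  also have "\<dots> = complex_of_real ((cmod a)^2 + (cmod b)^2)"
    by (simp add: cnj_mult_self del: of_real_power)
  finally show ?thesis using of_real_eq_iff by blast
qed

lemma orthonormal_pair_bessel: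
  assumes "orthonormal_pair y h"
  shows "(cmod (cinner y z))^2 + (cmod (cinner h z))^2 \<le> (norm z)^2"
proof -
  define p where "p = cinner y z"
  define q where "q = cinner h z"
  define w where "w = z - (p *s y + q *s h)"
  have yh: "cinner y y = 1" "cinner h h = 1" "cinner y h = 0" "cinner h y = 0"
    using assms by (simp_all add: orthonormal_pair_def cinner_self cinner_eq_0_commute)
  then have "cinner y w = 0" "cinner h w = 0"
    by (simp_all add: w_def cinner_simps p_def q_def)
  then have "cinner (p *s y + q *s h) w = 0" "cinner w (p *s y + q *s h) = 0"
    by (simp_all add: cinner_simps cinner_eq_0_commute)
  then have "cinner z z = cinner w w + cinner (p *s y + q *s h) (p *s y + q *s h)"
    unfolding w_def by (simp add: cinner_simps)
  also have "cinner (p *s y + q *s h) (p *s y + q *s h) = of_real ((cmod p)^2 + (cmod q)^2)"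
    using yh by (simp add: cinner_simps cnj_mult_self[unfolded mult.commute[of "cnj _"]])
  finally have "(norm z)^2 = (norm w)^2 + ((cmod p)^2 + (cmod q)^2)"
    by (simp add: cinner_self complex_eq_iff)
  then show ?thesis by (simp add: p_def q_def)
qed

text \<open>The complex orthogonal complement of W is the real orthogonal complement of
  W together with \<open>\<i> W\<close>, which has real dimension less than 2 n.\<close>

lemma exists_unit_cinner_orthogonal:
  fixes W :: "(complex^'n) set"
  assumes "finite W" "card W < CARD('n)"
  shows "\<exists>z. norm z = 1 \<and> (\<forall>w\<in>W. cinner w z = 0)"
proof -
  define W' where "W' = W \<union> (\<lambda>w. \<i> *s w) ` W"
  have "dim W' \<le> card W'"
    using assms(1) by (simp add: W'_def dim_le_card')
  also have "card W' \<le> card W + card W"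
    unfolding W'_def using assms(1) by (meson card_Un_le card_image_le le_trans add_left_mono)
  also have "\<dots> < DIM(complex^'n)" using assms(2) by simp
  finally obtain z where z: "z \<noteq> 0" "\<And>y. y \<in> span W' \<Longrightarrow> orthogonal z y"
    using orthogonal_to_subspace_exists by blast
  have "cinner w z = 0" if "w \<in> W" for w
  proof -
    have "inner w z = 0" "inner (\<i> *s w) z = 0"
      using that z(2)[of w] z(2)[of "\<i> *s w"]
      by (auto simp: orthogonal_def inner_commute W'_def intro: span_base)
    then show ?thesis
      by (simp only: complex_eq_iff inner_eq_Re_cinner[symmetric]
          inner_ii_scale_eq_Im_cinner[symmetric]) simp
  qed
  then show ?thesis
    using z(1) by (intro exI[of _ "complex_of_real (1 / norm z) *s z"])
      (simp add: norm_cscale norm_divide cinner_scale_right)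
qed

lemma exists_unit_cinner_orthogonal_image:
  fixes x :: "complex^'n"
  assumes "finite I" "card I + 1 < CARD('n)"
  shows "\<exists>z. norm z = 1 \<and> cinner x z = 0 \<and> (\<forall>i\<in>I. cinner (f i) z = 0)"
proof -
  have "card (insert x (f ` I)) \<le> card (f ` I) + 1"
    using assms(1) by (simp add: card_insert_if)
  also have "\<dots> \<le> card I + 1"
    using card_image_le[OF assms(1)] by simp
  finally show ?thesis
    using exists_unit_cinner_orthogonal[of "insert x (f ` I)"] assms by auto
qed

lemma exists_nonparallel:
  fixes v :: "nat \<Rightarrow> complex^'n"
  assumes "vec.dim (v ` {..<k}) \<ge> 2"
  shows "\<exists>j<k. v j - cinner x (v j) *s x \<noteq> 0"
proof (rule ccontr)
  assume "\<not> ?thesis"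
  then have "v ` {..<k} \<subseteq> vec.span {x}"
    by (auto simp: vec.span_singleton)
  then have "vec.dim (v ` {..<k}) \<le> card {x}" by (intro vec.dim_le_card) auto
  then show False using assms by simp
qed

lemma two_le_of_dim_image:
  fixes v :: "nat \<Rightarrow> complex^'n"
  assumes "vec.dim (v ` {..<k}) \<ge> 2"
  shows "k \<ge> 2"
proof -
  have "vec.dim (v ` {..<k}) \<le> card (v ` {..<k})"
    by (intro vec.dim_le_card) (auto intro: vec.span_base)
  also have "\<dots> \<le> k" using card_image_le[of "{..<k}" v] by simp
  finally show ?thesis using assms by simp
qed

subsection \<open>Rank-one matrices\<close>

definition outer :: "complex^'n \<Rightarrow> complex^'n \<Rightarrow> complex^'n^'n" where
  "outer p q = (\<chi> i j. p$i * cnj (q$j))"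

lemma outer_mult_vec: "outer p q *v z = cinner q z *s p"
  by (simp add: outer_def cinner_def matrix_vector_mult_def vec_eq_iff sum_distrib_left algebra_simps)

lemma sesq_outer: "sesq v (outer p q) u = cinner v p * cinner q u"
  by (simp add: sesq_cinner outer_mult_vec cinner_scale_right mult.commute)

lemma rank_one_eq_outer:
  fixes A :: "complex^'n^'n"
  assumes "rank A = 1"
  shows "\<exists>p q. p \<noteq> 0 \<and> q \<noteq> 0 \<and> A = outer p q"
proof -
  obtain Bs where Bs: "vec.independent Bs" "rows A \<subseteq> vec.span Bs" "card Bs = 1"
    using vec.basis_exists[of "rows A"] assms by (metis row_rank_def_gen)
  then obtain b where b: "Bs = {b}" by (meson card_1_singletonE)
  have b0: "b \<noteq> 0" using Bs(1) b vec.dependent_zero by blast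
  have "\<exists>c. A $ i = c *s b" for i
  proof -
    have "A $ i \<in> rows A" by (auto simp: rows_def row_def)
    then show ?thesis using Bs(2) b by (auto simp: vec.span_singleton)
  qed
  then obtain c where c: "\<And>i. A $ i = c i *s b" by metis
  define p where "p = (\<chi> i. c i)"
  define q where "q = (\<chi> j. cnj (b $ j))"
  have A: "A = outer p q" by (simp add: outer_def p_def q_def vec_eq_iff c)
  have "q \<noteq> 0" using b0 by (simp add: q_def vec_eq_iff)
  moreover have "p \<noteq> 0"
  proof
    assume "p = 0"
    then have "rows A \<subseteq> vec.span {}"
      by (auto simp: A outer_def rows_def row_def vec.span_zero zero_vec_def)
    then have "vec.dim (rows A) \<le> card ({} :: (complex^'n) set)"
      by (rule vec.dim_le_card) simp
    then show False using assms unfolding row_rank_def_gen by simp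
  qed
  ultimately show ?thesis using A by blast
qed

lemma rank_one_eq_scaled_outer:
  fixes A :: "complex^'n^'n"
  assumes "rank A = 1"
  shows "\<exists>r x y. r > 0 \<and> norm x = 1 \<and> norm y = 1 \<and> A = outer (complex_of_real r *s x) y"
proof -
  obtain p q where pq: "p \<noteq> 0" "q \<noteq> 0" "A = outer p q"
    using rank_one_eq_outer[OF assms] by blast
  then have "A = outer (complex_of_real (norm p * norm q) *s ((1 / norm p) *\<^sub>R p)) ((1 / norm q) *\<^sub>R q)"
    by (simp add: outer_def vec_eq_iff) (simp add: scaleR_conv_of_real field_simps)
  then show ?thesis
    using pq by (intro exI[of _ "norm p * norm q"] exI[of _ "(1 / norm p) *\<^sub>R p"]
        exI[of _ "(1 / norm q) *\<^sub>R q"]) simp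
qed

subsection \<open>The operator norm\<close>

lemma norm_mult_vec_le_opnorm: "norm (A *v z) \<le> opnorm A * norm z"
  unfolding opnorm_def by (rule onorm) simp

lemma opnorm_le:
  assumes "\<And>z. norm (A *v z) \<le> b * norm z"
  shows "opnorm A \<le> b"
  unfolding opnorm_def by (rule onorm_le) (rule assms)

lemma opnorm_nonneg: "opnorm A \<ge> 0"
  unfolding opnorm_def by (rule onorm_pos_le) simp

lemma cmat_scale_mult_vec: "cmat_scale c B *v z = c *s (B *v z)"
  by (simp add: cmat_scale_def matrix_vector_mult_def vec_eq_iff sum_distrib_left algebra_simps)

lemma opnorm_outer_le:
  assumes "norm x = 1" "orthonormal_pair y h" "r \<ge> 0"
  shows "opnorm (outer (complex_of_real r *s x) y) \<le> r"
proof (rule opnorm_le)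
  fix z
  have "norm (outer (complex_of_real r *s x) y *v z) = r * cmod (cinner y z)"
    using assms(1,3) by (simp add: outer_mult_vec norm_cscale norm_mult)
  also have "\<dots> \<le> r * norm z"
  proof -
    have "(cmod (cinner y z))^2 \<le> (norm z)^2"
      using orthonormal_pair_bessel[OF assms(2), of z] zero_le_power2[of "cmod (cinner h z)"]
      by linarith
    then have "cmod (cinner y z) \<le> norm z" by (rule power2_le_imp_le) simp
    then show ?thesis using assms(3) by (rule mult_left_mono)
  qed
  finally show "norm (outer (complex_of_real r *s x) y *v z) \<le> r * norm z" .
qed

subsection \<open>A one-sided Birkhoff--James orthogonal pair\<close>

definition partner ::
    "real \<Rightarrow> complex^'n \<Rightarrow> complex^'n \<Rightarrow> complex^'n \<Rightarrow> complex^'n \<Rightarrow> complex^'n^'n"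
  where "partner s x g y h =
    outer (complex_of_real s *s x) h + outer (complex_of_real s *s g) y + outer g h"

lemma partner_mult_vec:
  "partner s x g y h *v z =
    (complex_of_real s * cinner h z) *s x + (complex_of_real s * cinner y z + cinner h z) *s g"
  by (simp add: partner_def outer_mult_vec matrix_vector_mult_add_rdistrib vec_eq_iff algebra_simps)

lemma sesq_partner:
  "sesq v (partner s x g y h) u =
    complex_of_real s * cinner v x * cinner h u + complex_of_real s * cinner v g * cinner y u
    + cinner v g * cinner h u"
  by (simp add: sesq_cinner partner_mult_vec cinner_simps algebra_simps)

lemma sesq_partner_swap: "sesq v (partner s x g y h) u = cnj (sesq u (partner s y h x g) v)"
  by (simp add: sesq_partner cinner_commute[of u] cinner_commute[of _ v] algebra_simps)

lemma bj_orth_outer_partner: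
  assumes xg: "orthonormal_pair x g" and yh: "orthonormal_pair y h" and "r > 0"
  shows "bj_orth (outer (complex_of_real r *s x) y) (partner s x g y h)"
  unfolding bj_orth_def
proof
  fix c :: complex
  let ?A = "outer (complex_of_real r *s x) y"
  have "cinner y y = 1" "cinner h y = 0"
    using yh by (simp_all add: orthonormal_pair_def cinner_self cinner_eq_0_commute)
  then have "(?A + cmat_scale c (partner s x g y h)) *v y
      = complex_of_real r *s x + (c * complex_of_real s) *s g"
    by (simp add: matrix_vector_mult_add_rdistrib cmat_scale_mult_vec outer_mult_vec
        partner_mult_vec vec_eq_iff)
  then have "r^2 \<le> (norm ((?A + cmat_scale c (partner s x g y h)) *v y))^2"
    using orthonormal_pair_pythagoras[OF xg] \<open>r > 0\<close> by simp
  then have "r \<le> norm ((?A + cmat_scale c (partner s x g y h)) *v y)"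
    by (rule power2_le_imp_le) simp
  also have "\<dots> \<le> opnorm (?A + cmat_scale c (partner s x g y h))"
    using norm_mult_vec_le_opnorm[of _ y] yh by (simp add: orthonormal_pair_def)
  finally show "opnorm ?A \<le> opnorm (?A + cmat_scale c (partner s x g y h))"
    using opnorm_outer_le[of x y h r] xg yh \<open>r > 0\<close> by (simp add: orthonormal_pair_def)
qed

lemma cmod_rotation_identity:
  fixes p q :: complex and s :: real
  shows "(cmod (of_real s * q - p))^2 + (cmod (of_real s * p + q))^2
        = (1 + s^2) * ((cmod p)^2 + (cmod q)^2)"
  by (simp only: cmod_power2) (simp add: power2_eq_square algebra_simps)

lemma opnorm_partner_minus_outer_le:
  assumes xg: "orthonormal_pair x g" and yh: "orthonormal_pair y h" and "r > 0"
  shows "opnorm (partner s x g y h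
      + cmat_scale (complex_of_real (- 1 / r)) (outer (complex_of_real r *s x) y)) \<le> sqrt (1 + s^2)"
proof (rule opnorm_le)
  fix z
  let ?M = "partner s x g y h + cmat_scale (complex_of_real (- 1 / r)) (outer (complex_of_real r *s x) y)"
  define p where "p = cinner y z"
  define q where "q = cinner h z"
  have "?M *v z = (complex_of_real s * q - p) *s x + (complex_of_real s * p + q) *s g"
    using \<open>r > 0\<close>
    by (simp add: matrix_vector_mult_add_rdistrib cmat_scale_mult_vec outer_mult_vec
        partner_mult_vec vec_eq_iff p_def q_def algebra_simps)
  then have "(norm (?M *v z))^2 = (1 + s^2) * ((cmod p)^2 + (cmod q)^2)"
    by (simp only: orthonormal_pair_pythagoras[OF xg] cmod_rotation_identity)
  also have "\<dots> \<le> (1 + s^2) * (norm z)^2"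
    using orthonormal_pair_bessel[OF yh, of z] unfolding p_def q_def
    by (intro mult_left_mono) simp_all
  also have "\<dots> = (sqrt (1 + s^2) * norm z)^2"
    by (simp add: power_mult_distrib add_nonneg_nonneg)
  finally show "norm (?M *v z) \<le> sqrt (1 + s^2) * norm z"
    by (rule power2_le_imp_le) simp
qed

lemma opnorm_partner_gt:
  assumes xg: "orthonormal_pair x g" and yh: "orthonormal_pair y h" and "s > 0"
  shows "opnorm (partner s x g y h) > sqrt (1 + s^2)"
proof -
  define w where "w = complex_of_real s *s y + 1 *s h"
  have "cinner y y = 1" "cinner h h = 1" "cinner y h = 0" "cinner h y = 0"
    using yh by (simp_all add: orthonormal_pair_def cinner_self cinner_eq_0_commute)
  then have "partner s x g y h *v w = complex_of_real s *s x + complex_of_real (s^2 + 1) *s g"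
    by (simp add: partner_mult_vec w_def cinner_simps power2_eq_square)
  then have Bw: "(norm (partner s x g y h *v w))^2 = s^2 + (s^2 + 1)^2"
    by (simp only: orthonormal_pair_pythagoras[OF xg] norm_of_real) (simp add: add_nonneg_nonneg)
  have w: "(norm w)^2 = s^2 + 1"
    unfolding w_def orthonormal_pair_pythagoras[OF yh] by simp
  have "(norm (partner s x g y h *v w))^2 \<le> (opnorm (partner s x g y h))^2 * (norm w)^2"
    by (metis norm_mult_vec_le_opnorm norm_ge_zero power_mono power_mult_distrib)
  then have "(s^2 + 1) * (s^2 + 1) < (opnorm (partner s x g y h))^2 * (s^2 + 1)"
    using Bw w \<open>s > 0\<close> by (simp add: power2_eq_square) (smt (verit) mult_pos_pos)
  then have "(sqrt (1 + s^2))^2 < (opnorm (partner s x g y h))^2"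
    by (simp add: add_nonneg_nonneg add.commute)
      (metis mult_right_less_imp_less zero_le_power2 add_nonneg_nonneg zero_le_one)
  then show ?thesis using opnorm_nonneg by (rule power_less_imp_less_base)
qed

lemma not_bj_orth_partner_outer:
  assumes "orthonormal_pair x g" "orthonormal_pair y h" "r > 0" "s > 0"
  shows "\<not> bj_orth (partner s x g y h) (outer (complex_of_real r *s x) y)"
  using opnorm_partner_minus_outer_le[OF assms(1-3)] opnorm_partner_gt[OF assms(1,2,4)]
  unfolding bj_orth_def by (meson leD order.strict_trans2)

subsection \<open>Placing the partner in the constrained subspace\<close>

lemma partner_annihilates_split:
  fixes v u :: "nat \<Rightarrow> complex^'n"
  assumes "norm x = 1" "norm y = 1" "k < CARD('n)" "k \<ge> 2"
    and ab: "\<And>i. i < k \<Longrightarrow> cinner (v i) x * cinner y (u i) = 0"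
    and "i1 < k" "cinner (v i1) x = 0" "i2 < k" "cinner y (u i2) = 0"
  shows "\<exists>g h. orthonormal_pair x g \<and> orthonormal_pair y h \<and>
    (\<forall>i<k. sesq (v i) (partner 1 x g y h) (u i) = 0)"
proof -
  obtain T where T: "T \<subseteq> {..<k}" "T \<noteq> {}" "card T < k"
    and b0: "\<And>i. i \<in> T \<Longrightarrow> cinner y (u i) = 0"
    and a0: "\<And>i. i < k \<Longrightarrow> i \<notin> T \<Longrightarrow> cinner (v i) x = 0"
  proof (cases "\<forall>i<k. cinner (v i) x = 0")
    case True
    then show thesis using that[of "{i2}"] assms by auto
  next
    case False
    define S where "S = {i. i < k \<and> cinner (v i) x \<noteq> 0}"
    have "S \<subseteq> {..<k} - {i1}" using assms by (auto simp: S_def)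
    then have "card S < k"
      using card_mono[of "{..<k} - {i1}" S] assms by fastforce
    then show thesis
      using that[of S] False ab by (auto simp: S_def)
  qed
  have "finite T" using T(1) finite_subset by blast
  then have "card T \<ge> 1" using T(2) by (simp add: Suc_le_eq card_gt_0_iff)
  then have "card ({..<k} - T) + 1 < CARD('n)"
    using card_Diff_subset[OF \<open>finite T\<close> T(1)] T(3) assms(3) by simp
  then obtain g where g: "norm g = 1" "cinner x g = 0" "\<And>i. i \<in> {..<k} - T \<Longrightarrow> cinner (v i) g = 0"
    using exists_unit_cinner_orthogonal_image[of "{..<k} - T" x v] by auto
  obtain h where h: "norm h = 1" "cinner y h = 0" "\<And>i. i \<in> T \<Longrightarrow> cinner (u i) h = 0"
    using exists_unit_cinner_orthogonal_image[of T y u] \<open>finite T\<close> T(3) assms(3) by auto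
  have "sesq (v i) (partner 1 x g y h) (u i) = 0" if "i < k" for i
  proof (cases "i \<in> T")
    case True
    then show ?thesis using b0 h(3) by (simp add: sesq_partner cinner_eq_0_commute)
  next
    case False
    then show ?thesis using a0 g(3) that by (simp add: sesq_partner)
  qed
  then show ?thesis
    using assms(1,2) g h by (auto simp: orthonormal_pair_def)
qed

text \<open>The unit vector g is a rotated normalization of the component of v orthogonal to x.\<close>

lemma exists_orthonormal_pair_cancelling:
  assumes "norm x = 1" "v - cinner x v *s x \<noteq> 0" "cinner v x \<noteq> 0"
  shows "\<exists>g s. orthonormal_pair x g \<and> s > 0 \<and> complex_of_real s * cinner v x + cinner v g = 0"
proof -
  define a where "a = cinner v x"
  define w where "w = v - cinner x v *s x"
  define lam where "lam = - (a / complex_of_real (cmod a))"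
  define g where "g = (complex_of_real (1 / norm w) * lam) *s w"
  have xw: "cinner x w = 0"
    using assms(1) by (simp add: w_def cinner_simps cinner_self)
  have "cinner v w = cinner (w + cinner x v *s x) w" by (simp add: w_def)
  also have "\<dots> = complex_of_real ((norm w)^2)"
    using xw by (simp add: cinner_simps cinner_self)
  finally have "cinner v g = lam * complex_of_real (norm w)"
    using assms(2) by (simp add: g_def cinner_scale_right power2_eq_square w_def[symmetric])
  moreover have "complex_of_real (norm w / cmod a) * a + lam * complex_of_real (norm w) = 0"
    using assms(3) by (simp add: lam_def a_def field_simps)
  moreover have "orthonormal_pair x g"
  proof -
    have "cmod lam = 1" using assms(3) by (simp add: lam_def a_def norm_divide)
    moreover have "cinner x g = 0" using xw by (simp only: g_def cinner_scale_right) simp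
    ultimately show ?thesis
      using assms(1,2) by (simp add: orthonormal_pair_def g_def norm_cscale norm_divide w_def[symmetric])
  qed
  ultimately show ?thesis
    using assms(2,3) by (intro exI[of _ g] exI[of _ "norm w / cmod a"]) (simp add: a_def w_def)
qed

lemma partner_annihilates_left:
  fixes v u :: "nat \<Rightarrow> complex^'n"
  assumes "norm x = 1" "norm y = 1" "k < CARD('n)" "vec.dim (v ` {..<k}) \<ge> 2"
    and a: "\<And>i. i < k \<Longrightarrow> cinner (v i) x \<noteq> 0"
    and b: "\<And>i. i < k \<Longrightarrow> cinner y (u i) = 0"
  shows "\<exists>g h s. orthonormal_pair x g \<and> orthonormal_pair y h \<and> s > 0 \<and>
    (\<forall>i<k. sesq (v i) (partner s x g y h) (u i) = 0)"
proof -
  obtain j where j: "j < k" "v j - cinner x (v j) *s x \<noteq> 0"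
    using exists_nonparallel[OF assms(4)] by blast
  obtain g s where gs: "orthonormal_pair x g" "s > 0"
    and cancel: "complex_of_real s * cinner (v j) x + cinner (v j) g = 0"
    using exists_orthonormal_pair_cancelling[OF assms(1) j(2) a[OF j(1)]] by blast
  have "card ({..<k} - {j}) + 1 < CARD('n)" using j(1) assms(3) by simp
  then obtain h where h: "norm h = 1" "cinner y h = 0"
    "\<And>i. i \<in> {..<k} - {j} \<Longrightarrow> cinner (u i) h = 0"
    using exists_unit_cinner_orthogonal_image[of "{..<k} - {j}" y u] by auto
  have "sesq (v i) (partner s x g y h) (u i) = 0" if "i < k" for i
  proof (cases "i = j")
    case True
    have "sesq (v j) (partner s x g y h) (u j)
        = (complex_of_real s * cinner (v j) x + cinner (v j) g) * cinner h (u j)"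
      using b[OF j(1)] by (simp add: sesq_partner algebra_simps)
    then show ?thesis using True cancel by simp
  next
    case False
    then show ?thesis using b h(3) that by (simp add: sesq_partner cinner_eq_0_commute)
  qed
  then show ?thesis
    using gs h assms(2) by (auto simp: orthonormal_pair_def)
qed

lemma partner_annihilates:
  fixes v u :: "nat \<Rightarrow> complex^'n"
  assumes "norm x = 1" "norm y = 1" "k < CARD('n)"
    and "vec.dim (v ` {..<k}) \<ge> 2" "vec.dim (u ` {..<k}) \<ge> 2"
    and ab: "\<And>i. i < k \<Longrightarrow> cinner (v i) x * cinner y (u i) = 0"
  shows "\<exists>g h s. orthonormal_pair x g \<and> orthonormal_pair y h \<and> s > 0 \<and>
    (\<forall>i<k. sesq (v i) (partner s x g y h) (u i) = 0)"
proof -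
  consider "\<forall>i<k. cinner (v i) x \<noteq> 0" | "\<forall>i<k. cinner y (u i) \<noteq> 0"
    | i1 i2 where "i1 < k" "cinner (v i1) x = 0" "i2 < k" "cinner y (u i2) = 0"
    by blast
  then show ?thesis
  proof cases
    case 1
    then show ?thesis using partner_annihilates_left[of x y k v u] assms by simp
  next
    case 2
    then obtain h g s where "orthonormal_pair y h" "orthonormal_pair x g" "s > 0"
      "\<forall>i<k. sesq (u i) (partner s y h x g) (v i) = 0"
      using partner_annihilates_left[of y x k u v] assms
      by (auto simp: cinner_commute[of "u _"] cinner_commute[of x])
    then show ?thesis by (metis sesq_partner_swap complex_cnj_zero)
  next
    case 3
    then show ?thesis
      using partner_annihilates_split[of x y k v u] two_le_of_dim_image[OF assms(4)] assms
      by (metis zero_less_one)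
  qed
qed

theorem lemma3p4:
  fixes v u :: "nat \<Rightarrow> complex^'n" and k :: nat
  assumes "CARD('n) \<ge> 2"
    and "k \<le> CARD('n) - 1"
    and "\<And>i. i < k \<Longrightarrow> norm (v i) = 1"
    and "\<And>i. i < k \<Longrightarrow> norm (u i) = 1"
    and "vec.dim (v ` {..<k}) \<ge> 2"
    and "vec.dim (u ` {..<k}) \<ge> 2"
  shows "\<not> (\<exists>A \<in> {X :: complex^'n^'n. \<forall>i<k. sesq (v i) X (u i) = 0}.
            rank A = 1 \<and> left_symmetric_in A {X. \<forall>i<k. sesq (v i) X (u i) = 0})"
proof
  assume "\<exists>A \<in> {X :: complex^'n^'n. \<forall>i<k. sesq (v i) X (u i) = 0}.
            rank A = 1 \<and> left_symmetric_in A {X. \<forall>i<k. sesq (v i) X (u i) = 0}"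
  then obtain A :: "complex^'n^'n" where AV: "\<forall>i<k. sesq (v i) A (u i) = 0" and "rank A = 1"
    and sym: "left_symmetric_in A {X. \<forall>i<k. sesq (v i) X (u i) = 0}" by blast
  then obtain r x y where r: "r > 0" and xy: "norm x = 1" "norm y = 1"
    and A: "A = outer (complex_of_real r *s x) y"
    using rank_one_eq_scaled_outer by blast
  have "cinner (v i) x * cinner y (u i) = 0" if "i < k" for i
    using AV that r by (simp add: A sesq_outer cinner_scale_right)
  moreover have "k < CARD('n)" using assms(1,2) by linarith
  ultimately obtain g h s where gh: "orthonormal_pair x g" "orthonormal_pair y h" "s > 0"
    and BV: "\<forall>i<k. sesq (v i) (partner s x g y h) (u i) = 0"
    using partner_annihilates[OF xy _ assms(5,6)] by blast
  have "bj_orth A (partner s x g y h)"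
    using bj_orth_outer_partner[OF gh(1,2) r] by (simp add: A)
  moreover have "\<not> bj_orth (partner s x g y h) A"
    using not_bj_orth_partner_outer[OF gh(1,2) r gh(3)] by (simp add: A)
  ultimately show False using sym BV unfolding left_symmetric_in_def by blast
qed

end
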